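(* Let $\mathbf{A},\mathbf{B}\in\mathbb{R}^{d\times d}$ be symmetric positive definite matrices with $\|\mathbf{A}-\mathbf{B}\|_2\le\varepsilon_1\|\mathbf{A}\|_2$, and let $\mathbf{r}_1,\mathbf{r}_2\in\mathbb{R}^d$ be unit vectors with $\|\mathbf{r}_1-\mathbf{r}_2\|_2\le\varepsilon_2$. If $\frac{\lambda_{\max}(\mathbf{A})}{\lambda_{\min}(\mathbf{A})}(\varepsilon_2+\varepsilon_1)\le\frac12$, then $$\Big\|\frac{\mathbf{A}\mathbf{r}_1}{\|\mathbf{A}\mathbf{r}_1\|_2}-\frac{\mathbf{B}\mathbf{r}_2}{\|\mathbf{B}\mathbf{r}_2\|_2}\Big\|_2\le4\frac{\lambda_{\max}(\mathbf{A})}{\lambda_{\min}(\mathbf{A})}(\varepsilon_2+\varepsilon_1).$$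
   Context: $\|\cdot\|_2$ on matrices is the operator norm; $\lambda_{\max}(\mathbf{A}),\lambda_{\min}(\mathbf{A})$ are the largest and smallest eigenvalues of $\mathbf{A}$. *)

theory Defs
  imports "HOL-Analysis.Analysis"
begin

text \<open>Real square matrices are rendered as real^'n^'n (dimension d = CARD('n)).\<close>

definition sym_pos_def_mat :: "real^'n^'n \<Rightarrow> bool" where
  "sym_pos_def_mat A \<longleftrightarrow> transpose A = A \<and> (\<forall>x. x \<noteq> 0 \<longrightarrow> x \<bullet> (A *v x) > 0)"

definition op_norm :: "real^'n^'m \<Rightarrow> real" where
  "op_norm A = onorm (\<lambda>x. A *v x)"

definition eigenvalues :: "real^'n^'n \<Rightarrow> real set" where
  "eigenvalues A = {l. \<exists>v. v \<noteq> 0 \<and> A *v v = l *\<^sub>R v}"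

definition lambda_max :: "real^'n^'n \<Rightarrow> real" where
  "lambda_max A = Max (eigenvalues A)"

definition lambda_min :: "real^'n^'n \<Rightarrow> real" where
  "lambda_min A = Min (eigenvalues A)"

end

theory Submission
  imports Defs
begin

text \<open>
  Normalisation at most doubles distances relative to the first vector:
  \<open>\<parallel>u/\<parallel>u\<parallel> - v/\<parallel>v\<parallel>\<parallel> \<le> 2\<parallel>u - v\<parallel>/\<parallel>u\<parallel>\<close>. Writing \<open>A r\<^sub>1 - B r\<^sub>2 = A (r\<^sub>1 - r\<^sub>2) + (A - B) r\<^sub>2\<close>
  bounds the numerator by \<open>\<parallel>A\<parallel>(\<epsilon>\<^sub>2 + \<epsilon>\<^sub>1)\<close>, and the denominator is at least
  \<open>\<lambda>\<^sub>m\<^sub>i\<^sub>n(A)\<close>. The two spectral facts used, \<open>\<parallel>A\<parallel> \<le> \<lambda>\<^sub>m\<^sub>a\<^sub>x(A)\<close> and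
  \<open>\<parallel>A x\<parallel> \<ge> \<lambda>\<^sub>m\<^sub>i\<^sub>n(A) \<parallel>x\<parallel>\<close>, come from the Rayleigh quotient rather than the spectral
  theorem: the quadratic form \<open>x \<bullet> A x\<close> attains its maximum \<open>c\<close> on the unit sphere at some
  \<open>v\<close>, and \<open>c I - A\<close> is then positive semidefinite with vanishing form at \<open>v\<close>, so
  Cauchy-Schwarz for that form forces \<open>A v = c v\<close>. Eigenvectors of distinct eigenvalues
  are orthogonal, so there are only finitely many eigenvalues and \<open>Max\<close>/\<open>Min\<close> are meaningful.
\<close>

lemma nonneg_quadratic_discriminant_le:
  fixes p q r :: real
  assumes nonneg: "\<And>t. 0 \<le> p + 2 * q * t + r * t^2" and "0 \<le> r"
  shows "q^2 \<le> p * r"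
proof (cases "r = 0")
  case True
  have "q = 0"
  proof (rule ccontr)
    assume "q \<noteq> 0"
    then show False
      using nonneg[of "- (p + 1) / (2 * q)"] True by (simp add: field_simps)
  qed
  then show ?thesis using True by simp
next
  case False
  with \<open>0 \<le> r\<close> have "0 < r" by simp
  have "0 \<le> p + 2 * q * (- q / r) + r * (- q / r)^2" by (rule nonneg)
  also have "\<dots> = (p * r - q^2) / r"
    using \<open>0 < r\<close> by (simp add: field_simps power2_eq_square)
  finally show ?thesis
    using \<open>0 < r\<close> by (simp add: zero_le_divide_iff)
qed

lemma self_adjoint_psd_Cauchy_Schwarz:
  fixes f :: "'a::real_inner \<Rightarrow> 'a"
  assumes "linear f" and self_adjoint: "\<And>x y. f x \<bullet> y = x \<bullet> f y"
    and psd: "\<And>x. 0 \<le> x \<bullet> f x"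
  shows "(y \<bullet> f x)^2 \<le> (x \<bullet> f x) * (y \<bullet> f y)"
proof (rule nonneg_quadratic_discriminant_le)
  fix t
  have "(x + t *\<^sub>R y) \<bullet> f (x + t *\<^sub>R y)
      = x \<bullet> f x + 2 * (y \<bullet> f x) * t + (y \<bullet> f y) * t^2"
    using self_adjoint[of y x]
    by (simp add: linear_add[OF \<open>linear f\<close>] linear_scale[OF \<open>linear f\<close>]
        inner_commute[of x] algebra_simps power2_eq_square)
  then show "0 \<le> x \<bullet> f x + 2 * (y \<bullet> f x) * t + (y \<bullet> f y) * t^2"
    using psd by metis
qed (rule psd)

lemma self_adjoint_psd_form_zero_imp_zero:
  fixes f :: "'a::real_inner \<Rightarrow> 'a"
  assumes "linear f" and "\<And>x y. f x \<bullet> y = x \<bullet> f y" and "\<And>x. 0 \<le> x \<bullet> f x"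
    and "x \<bullet> f x = 0"
  shows "f x = 0"
  using self_adjoint_psd_Cauchy_Schwarz[OF assms(1-3), where x = x and y = "f x"] assms(4) by simp

lemma self_adjoint_psd_norm_le:
  fixes f :: "'a::real_inner \<Rightarrow> 'a"
  assumes "linear f" and "\<And>x y. f x \<bullet> y = x \<bullet> f y" and psd: "\<And>x. 0 \<le> x \<bullet> f x"
    and rayleigh: "\<And>x. x \<bullet> f x \<le> c * (x \<bullet> x)"
  shows "norm (f x) \<le> c * norm x"
proof (cases "x = 0")
  case False
  have "0 \<le> c"
    using order_trans[OF psd rayleigh, of x] inner_gt_zero_iff[of x] \<open>x \<noteq> 0\<close>
    by (meson not_le zero_le_mult_iff)
  have "(f x \<bullet> f x) * (f x \<bullet> f x) \<le> (x \<bullet> f x) * (f x \<bullet> f (f x))"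
    using self_adjoint_psd_Cauchy_Schwarz[OF assms(1-3)] by (simp add: power2_eq_square)
  also have "\<dots> \<le> (c * (x \<bullet> x)) * (c * (f x \<bullet> f x))"
    using rayleigh psd \<open>0 \<le> c\<close> by (intro mult_mono mult_nonneg_nonneg) simp_all
  finally have "(f x \<bullet> f x) * (f x \<bullet> f x) \<le> (c^2 * (x \<bullet> x)) * (f x \<bullet> f x)"
    by (simp add: power2_eq_square algebra_simps)
  then have "f x \<bullet> f x \<le> c^2 * (x \<bullet> x)"
    by (cases "f x = 0") (auto elim: mult_right_le_imp_le)
  then have "(norm (f x))^2 \<le> (c * norm x)^2"
    by (simp add: power2_norm_eq_inner power_mult_distrib)
  then show ?thesis
    by (rule power2_le_imp_le) (simp add: \<open>0 \<le> c\<close>)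
qed (simp add: linear_0[OF \<open>linear f\<close>])

lemma rayleigh_lower_bound_imp_norm_ge:
  fixes x y :: "'a::real_inner"
  assumes "m * (x \<bullet> x) \<le> x \<bullet> y"
  shows "m * norm x \<le> norm y"
proof (cases "m * norm x \<le> 0")
  case False
  then have "0 < norm x" by (auto simp: mult_le_0_iff)
  have "norm x * (m * norm x) \<le> norm x * norm y"
    using assms norm_cauchy_schwarz[of x y]
    by (simp add: power2_norm_eq_inner[symmetric] power2_eq_square algebra_simps)
  then show ?thesis using \<open>0 < norm x\<close> by simp
qed (use norm_ge_zero[of y] in linarith)

lemma self_adjoint_max_rayleigh_eigenvector:
  fixes f :: "'a::euclidean_space \<Rightarrow> 'a"
  assumes "linear f" and self_adjoint: "\<And>x y. f x \<bullet> y = x \<bullet> f y"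
  obtains c v where "v \<noteq> 0" "f v = c *\<^sub>R v" "\<And>x. x \<bullet> f x \<le> c * (x \<bullet> x)"
proof -
  have cont: "continuous_on (sphere 0 1) (\<lambda>x. x \<bullet> f x)"
    using \<open>linear f\<close>
    by (intro continuous_intros linear_continuous_on) (simp add: linear_conv_bounded_linear)
  have "sphere (0::'a) 1 \<noteq> {}" by simp
  then obtain v where v: "v \<in> sphere 0 1" and max: "\<And>u. u \<in> sphere 0 1 \<Longrightarrow> u \<bullet> f u \<le> v \<bullet> f v"
    using continuous_attains_sup[OF compact_sphere _ cont] by blast
  define c where "c = v \<bullet> f v"
  have rayleigh: "x \<bullet> f x \<le> c * (x \<bullet> x)" for x
  proof (cases "x = 0")
    case False
    let ?u = "(1 / norm x) *\<^sub>R x"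
    have "x \<bullet> f x = (norm x)^2 * (?u \<bullet> f ?u)"
      using False by (simp add: linear_scale[OF \<open>linear f\<close>] power2_eq_square)
    also have "\<dots> \<le> (norm x)^2 * c"
      unfolding c_def using False by (intro mult_left_mono max) simp_all
    finally show ?thesis by (simp add: power2_norm_eq_inner mult.commute)
  qed (simp add: linear_0[OF \<open>linear f\<close>])
  have "c *\<^sub>R v - f v = 0"
  proof (rule self_adjoint_psd_form_zero_imp_zero[where f = "\<lambda>x. c *\<^sub>R x - f x"])
    show "linear (\<lambda>x. c *\<^sub>R x - f x)"
      using \<open>linear f\<close> by (intro linear_compose_sub linear_scaleR)
    show "(c *\<^sub>R x - f x) \<bullet> y = x \<bullet> (c *\<^sub>R y - f y)" for x y
      by (simp add: inner_diff_left inner_diff_right self_adjoint)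
    show "0 \<le> x \<bullet> (c *\<^sub>R x - f x)" for x
      using rayleigh[of x] by (simp add: inner_diff_right)
    show "v \<bullet> (c *\<^sub>R v - f v) = 0"
      using v by (simp add: inner_diff_right c_def power2_norm_eq_inner[symmetric])
  qed
  then have "f v = c *\<^sub>R v" by simp
  moreover have "v \<noteq> 0" using v by auto
  ultimately show thesis using that rayleigh by blast
qed

lemma self_adjoint_min_rayleigh_eigenvector:
  fixes f :: "'a::euclidean_space \<Rightarrow> 'a"
  assumes "linear f" and "\<And>x y. f x \<bullet> y = x \<bullet> f y"
  obtains c v where "v \<noteq> 0" "f v = c *\<^sub>R v" "\<And>x. c * (x \<bullet> x) \<le> x \<bullet> f x"
proof -
  obtain c v where v: "v \<noteq> 0" and ev: "- f v = c *\<^sub>R v"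
    and rayleigh: "\<And>x. x \<bullet> - f x \<le> c * (x \<bullet> x)"
    by (rule self_adjoint_max_rayleigh_eigenvector[of "\<lambda>x. - f x"])
      (use assms in \<open>simp_all add: linear_compose_neg\<close>)
  show thesis
  proof (rule that[of v "- c"])
    show "f v = (- c) *\<^sub>R v" using ev by (metis minus_minus scaleR_minus_left)
    show "(- c) * (x \<bullet> x) \<le> x \<bullet> f x" for x using rayleigh[of x] by simp
  qed (fact v)
qed

lemma symmetric_matrix_self_adjoint:
  fixes A :: "real^'n^'n"
  assumes "transpose A = A"
  shows "(A *v x) \<bullet> y = x \<bullet> (A *v y)"
  by (metis dot_lmul_matrix vector_transpose_matrix assms)

lemma finite_eigenvalues_symmetric:
  fixes A :: "real^'n^'n"
  assumes "transpose A = A"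
  shows "finite (eigenvalues A)"
proof -
  define v where "v l = (SOME v. v \<noteq> 0 \<and> A *v v = l *\<^sub>R v)" for l
  have v: "v l \<noteq> 0 \<and> A *v v l = l *\<^sub>R v l" if "l \<in> eigenvalues A" for l
    using that unfolding eigenvalues_def v_def by (rule CollectE) (rule someI_ex)
  have inj: "inj_on v (eigenvalues A)"
  proof (rule inj_onI)
    fix l l' assume l: "l \<in> eigenvalues A" "l' \<in> eigenvalues A" "v l = v l'"
    then have "l *\<^sub>R v l = l' *\<^sub>R v l" using v[of l] v[of l'] by metis
    then show "l = l'" using v[OF l(1)] by simp
  qed
  have "pairwise orthogonal (v ` eigenvalues A)"
  proof (rule pairwiseI, clarify)
    fix l l' assume l: "l \<in> eigenvalues A" "l' \<in> eigenvalues A" "v l \<noteq> v l'"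
    have "l * (v l \<bullet> v l') = (A *v v l) \<bullet> v l'" using v[OF l(1)] by simp
    also have "\<dots> = v l \<bullet> (A *v v l')" by (rule symmetric_matrix_self_adjoint[OF assms])
    also have "\<dots> = l' * (v l \<bullet> v l')" using v[OF l(2)] by simp
    finally have "(l - l') * (v l \<bullet> v l') = 0" by (simp add: algebra_simps)
    then show "orthogonal (v l) (v l')" using l by (auto simp: orthogonal_def)
  qed
  moreover have "0 \<notin> v ` eigenvalues A" using v by auto
  ultimately have "independent (v ` eigenvalues A)" by (rule pairwise_orthogonal_independent)
  then have "finite (v ` eigenvalues A)" by (rule finiteI_independent)
  then show ?thesis using inj finite_imageD by blast
qed

lemma symmetric_matrix_lambda_min:
  fixes A :: "real^'n^'n"
  assumes "transpose A = A"
  shows "lambda_min A \<in> eigenvalues A" and "lambda_min A * norm x \<le> norm (A *v x)"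
proof -
  obtain m v where "v \<noteq> 0" "A *v v = m *\<^sub>R v" and rayleigh: "\<And>x. m * (x \<bullet> x) \<le> x \<bullet> (A *v x)"
    using self_adjoint_min_rayleigh_eigenvector[OF matrix_vector_mul_linear]
      symmetric_matrix_self_adjoint[OF assms] by metis
  then have m: "m \<in> eigenvalues A" by (auto simp: eigenvalues_def)
  note fin = finite_eigenvalues_symmetric[OF assms]
  show "lambda_min A \<in> eigenvalues A"
    unfolding lambda_min_def using fin m by (intro Min_in) auto
  have "lambda_min A \<le> m"
    unfolding lambda_min_def using fin m by simp
  then have "lambda_min A * norm x \<le> m * norm x" by (simp add: mult_right_mono)
  also have "\<dots> \<le> norm (A *v x)" by (rule rayleigh_lower_bound_imp_norm_ge[OF rayleigh])
  finally show "lambda_min A * norm x \<le> norm (A *v x)" .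
qed

lemma sym_pos_def_mat_eigenvalue_pos:
  assumes "sym_pos_def_mat A" and "l \<in> eigenvalues A"
  shows "0 < l"
proof -
  obtain v where "v \<noteq> 0" and ev: "A *v v = l *\<^sub>R v" using assms(2) by (auto simp: eigenvalues_def)
  then have "0 < v \<bullet> (A *v v)" using assms(1) unfolding sym_pos_def_mat_def by blast
  then have "0 < l * (v \<bullet> v)" using ev by simp
  then show ?thesis using inner_ge_zero[of v] by (auto simp: zero_less_mult_iff)
qed

lemma sym_pos_def_mat_lambda_min_pos:
  assumes "sym_pos_def_mat A"
  shows "0 < lambda_min A"
proof -
  have "transpose A = A" using assms by (simp add: sym_pos_def_mat_def)
  then show ?thesis by (intro sym_pos_def_mat_eigenvalue_pos[OF assms] symmetric_matrix_lambda_min(1))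
qed

lemma norm_matrix_vector_le_op_norm: "norm (A *v x) \<le> op_norm A * norm x"
  unfolding op_norm_def by (rule onorm[OF matrix_vector_mul_bounded_linear])

lemma op_norm_nonneg: "0 \<le> op_norm A"
  unfolding op_norm_def by (rule onorm_pos_le[OF matrix_vector_mul_bounded_linear])

lemma sym_pos_def_mat_op_norm_le_lambda_max:
  assumes "sym_pos_def_mat A"
  shows "op_norm A \<le> lambda_max A"
proof -
  have sym: "transpose A = A" using assms by (simp add: sym_pos_def_mat_def)
  have psd: "0 \<le> x \<bullet> (A *v x)" for x
    using assms unfolding sym_pos_def_mat_def by (cases "x = 0") (auto intro: less_imp_le)
  obtain c v where "v \<noteq> 0" "A *v v = c *\<^sub>R v" and rayleigh: "\<And>x. x \<bullet> (A *v x) \<le> c * (x \<bullet> x)"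
    using self_adjoint_max_rayleigh_eigenvector[OF matrix_vector_mul_linear]
      symmetric_matrix_self_adjoint[OF sym] by metis
  then have c: "c \<in> eigenvalues A" by (auto simp: eigenvalues_def)
  have "op_norm A \<le> c"
    unfolding op_norm_def using matrix_vector_mul_linear symmetric_matrix_self_adjoint[OF sym] psd rayleigh
    by (intro onorm_le self_adjoint_psd_norm_le)
  also have "c \<le> lambda_max A"
    unfolding lambda_max_def using finite_eigenvalues_symmetric[OF sym] c by simp
  finally show ?thesis .
qed

lemma norm_matrix_vector_perturbation_le:
  fixes A B :: "real^'n^'m"
  assumes "op_norm (A - B) \<le> eps1 * op_norm A" and "norm y = 1" and "norm (x - y) \<le> eps2"
  shows "norm (A *v x - B *v y) \<le> op_norm A * (eps2 + eps1)"
proof -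
  have "A *v x - B *v y = A *v (x - y) + (A - B) *v y"
    by (simp add: matrix_vector_mult_diff_distrib matrix_vector_mult_diff_rdistrib)
  then have "norm (A *v x - B *v y) \<le> norm (A *v (x - y)) + norm ((A - B) *v y)"
    by (metis norm_triangle_ineq)
  also have "\<dots> \<le> op_norm A * norm (x - y) + op_norm (A - B) * norm y"
    by (intro add_mono norm_matrix_vector_le_op_norm)
  also have "\<dots> \<le> op_norm A * eps2 + eps1 * op_norm A"
    using assms mult_left_mono[OF assms(3) op_norm_nonneg[of A]] by simp
  finally show ?thesis by (simp add: algebra_simps)
qed

lemma norm_normalized_diff_le:
  fixes u v :: "'a::real_normed_vector"
  assumes "u \<noteq> 0"
  shows "norm ((1 / norm u) *\<^sub>R u - (1 / norm v) *\<^sub>R v) \<le> 2 * norm (u - v) / norm u"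
proof (cases "v = 0")
  case False
  have nu: "0 < norm u" "0 < norm v" using assms False by auto
  have "(1 / norm u) *\<^sub>R u - (1 / norm v) *\<^sub>R v
      = (1 / norm u) *\<^sub>R (u - v) + (1 / norm u - 1 / norm v) *\<^sub>R v"
    by (simp add: algebra_simps)
  then have "norm ((1 / norm u) *\<^sub>R u - (1 / norm v) *\<^sub>R v)
      \<le> norm ((1 / norm u) *\<^sub>R (u - v)) + norm ((1 / norm u - 1 / norm v) *\<^sub>R v)"
    by (metis norm_triangle_ineq)
  also have "norm ((1 / norm u) *\<^sub>R (u - v)) = norm (u - v) / norm u"
    using nu by simp
  also have "norm ((1 / norm u - 1 / norm v) *\<^sub>R v) = \<bar>norm v - norm u\<bar> / norm u"
  proof -
    have "1 / norm u - 1 / norm v = (norm v - norm u) / (norm u * norm v)"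
      using nu by (simp add: field_simps)
    then show ?thesis using nu by simp
  qed
  also have "\<dots> \<le> norm (u - v) / norm u"
    using nu by (intro divide_right_mono) (metis norm_minus_commute norm_triangle_ineq3, simp)
  finally show ?thesis by simp
qed (use assms in simp)

theorem lemma1:
  fixes A B :: "real^'n^'n" and r1 r2 :: "real^'n" and eps1 eps2 :: real
  assumes "sym_pos_def_mat A" and "sym_pos_def_mat B"
    and "op_norm (A - B) \<le> eps1 * op_norm A"
    and "norm r1 = 1" and "norm r2 = 1"
    and "norm (r1 - r2) \<le> eps2"
    and "lambda_max A / lambda_min A * (eps2 + eps1) \<le> 1 / 2"
  shows "norm ((1 / norm (A *v r1)) *\<^sub>R (A *v r1) - (1 / norm (B *v r2)) *\<^sub>R (B *v r2))
           \<le> 4 * (lambda_max A / lambda_min A) * (eps2 + eps1)"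
proof -
  let ?e = "eps2 + eps1"
  have lmin: "0 < lambda_min A" by (rule sym_pos_def_mat_lambda_min_pos[OF assms(1)])
  have Ar1: "lambda_min A \<le> norm (A *v r1)"
    using symmetric_matrix_lambda_min(2)[of A r1] assms(1,4) by (simp add: sym_pos_def_mat_def)
  have opA: "op_norm A \<le> lambda_max A"
    by (rule sym_pos_def_mat_op_norm_le_lambda_max[OF assms(1)])
  have opA_pos: "0 < op_norm A"
    using norm_matrix_vector_le_op_norm[of A r1] Ar1 lmin assms(4) by simp
  have diff: "norm (A *v r1 - B *v r2) \<le> op_norm A * ?e"
    using norm_matrix_vector_perturbation_le assms(3,5,6) .
  have e: "0 \<le> ?e"
    using order_trans[OF norm_ge_zero diff] opA_pos by (simp add: zero_le_mult_iff)
  have "norm ((1 / norm (A *v r1)) *\<^sub>R (A *v r1) - (1 / norm (B *v r2)) *\<^sub>R (B *v r2))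
      \<le> 2 * norm (A *v r1 - B *v r2) / norm (A *v r1)"
    by (rule norm_normalized_diff_le) (use Ar1 lmin in auto)
  also have "\<dots> \<le> 2 * (lambda_max A * ?e) / lambda_min A"
    using order_trans[OF diff mult_right_mono[OF opA e]] Ar1 lmin opA opA_pos e
    by (intro frac_le) auto
  also have "\<dots> = 2 * (lambda_max A / lambda_min A * ?e)"
    by simp
  also have "\<dots> \<le> 4 * (lambda_max A / lambda_min A) * ?e"
  proof -
    have "0 \<le> lambda_max A / lambda_min A * ?e" using opA opA_pos lmin e by simp
    then show ?thesis by (simp only: mult.assoc)
  qed
  finally show ?thesis .
qed

end
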